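(* Let $a, w \in \mathbb{R}$ with $w < -|a|$, and let $\tau_c(a,w) := \frac{1}{\sqrt{w^2-a^2}}\arccos(a/w)$. Then $\tau_c(a,w) > 1$ if and only if $a > -1$ and $-R(-a) < w$.
   Context: $\arccos:[-1,1]\to[0,\pi]$. $C(\theta) := \theta\cot\theta$ for $\theta\in(0,\pi)$ is a strictly decreasing bijection from $(0,\pi)$ onto $(-\infty,1)$ with inverse $C^{-1}$; $R(r) := C^{-1}(r)/\sin C^{-1}(r)$ for $r<1$. *)

theory Defs
  imports Complex_Main
begin

definition C_fun :: "real \<Rightarrow> real" where
  "C_fun \<theta> = \<theta> * cot \<theta>"

text \<open>Inverse of C restricted to (0, pi); meaningful for r < 1.\<close>
definition C_inv :: "real \<Rightarrow> real" where
  "C_inv r = (THE \<theta>. 0 < \<theta> \<and> \<theta> < pi \<and> C_fun \<theta> = r)"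

definition R_fun :: "real \<Rightarrow> real" where
  "R_fun r = C_inv r / sin (C_inv r)"

definition tau_c :: "real \<Rightarrow> real \<Rightarrow> real" where
  "tau_c a w = arccos (a / w) / sqrt (w\<^sup>2 - a\<^sup>2)"

end

theory Submission
  imports Defs
begin

text \<open>With \<open>\<theta> = arccos (a/w)\<close> and \<open>y = sqrt (w\<^sup>2 - a\<^sup>2) = -w sin \<theta>\<close> one has
  \<open>\<tau>\<^sub>c = \<theta> / y\<close> and \<open>-a = y cot \<theta>\<close>. So \<open>\<tau>\<^sub>c > 1\<close> means \<open>y < \<theta>\<close>, which by the monotonicity
  of cot is \<open>-a = y cot \<theta> < y cot y = C y\<close>; as \<open>C\<close> is a decreasing bijection onto \<open>(-\<infinity>, 1)\<close>
  this is \<open>-a < 1\<close> and \<open>y < C\<^sup>-\<^sup>1(-a)\<close>. Finally \<open>w\<^sup>2 = y\<^sup>2 + a\<^sup>2\<close> and \<open>R(r)\<^sup>2 = C\<^sup>-\<^sup>1(r)\<^sup>2 + r\<^sup>2\<close>,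
  so the last condition is \<open>-w < R(-a)\<close>.\<close>

lemma sin_less_self:
  fixes x :: real
  assumes "0 < x"
  shows "sin x < x"
proof (cases "x < 2")
  case True
  have "cos (x/2) < cos 0" using assms True pi_ge_two by (intro cos_monotone_0_pi) auto
  moreover have "sin (x/2) > 0" using assms True pi_ge_two by (intro sin_gt_zero) auto
  moreover have "sin x = 2 * sin (x/2) * cos (x/2)" using sin_double[of "x/2"] by simp
  ultimately have "sin x < 2 * sin (x/2)" by (simp add: mult_strict_left_mono)
  also have "\<dots> \<le> x" using sin_x_le_x[of "x/2"] assms by simp
  finally show ?thesis .
next
  case False
  then show ?thesis using sin_le_one[of x] by linarith
qed

lemma cot_strict_antimono:
  assumes "0 < x" "x < y" "y < pi"
  shows "cot y < cot x"
proof -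
  have "sin x > 0" "sin y > 0" using assms by (auto intro!: sin_gt_zero)
  moreover have "sin (y - x) > 0" using assms by (intro sin_gt_zero) auto
  then have "cos y * sin x < cos x * sin y" by (simp add: sin_diff algebra_simps)
  ultimately show ?thesis by (simp add: cot_def divide_simps)
qed

lemma cot_less_cot_iff:
  assumes "0 < x" "x < pi" "0 < y" "y < pi"
  shows "cot x < cot y \<longleftrightarrow> y < x"
  using assms cot_strict_antimono[of x y] cot_strict_antimono[of y x]
  by (cases x y rule: linorder_cases) auto

lemma C_fun_strict_antimono:
  assumes "0 < x" "x < y" "y < pi"
  shows "C_fun y < C_fun x"
proof (rule DERIV_neg_imp_decreasing[OF assms(2)])
  fix t assume "x \<le> t" "t \<le> y"
  with assms have t: "0 < t" "t < pi" by auto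
  then have sin_t: "sin t > 0" by (intro sin_gt_zero)
  have "DERIV C_fun t :> cot t - t / (sin t)\<^sup>2"
    unfolding C_fun_def[abs_def] using sin_t
    by (auto intro!: derivative_eq_intros DERIV_cot simp: field_simps)
  moreover have "sin t * cos t < t"
    using sin_less_self[of "2 * t"] t by (simp add: sin_double)
  then have "cot t - t / (sin t)\<^sup>2 < 0"
    using sin_t by (simp add: cot_def field_simps power2_eq_square)
  ultimately show "\<exists>d. DERIV C_fun t :> d \<and> d < 0" by blast
qed

lemma C_fun_less_iff:
  assumes "0 < x" "x < pi" "0 < y" "y < pi"
  shows "C_fun x < C_fun y \<longleftrightarrow> y < x"
  using assms C_fun_strict_antimono[of x y] C_fun_strict_antimono[of y x]
  by (cases x y rule: linorder_cases) auto

lemma C_fun_less_one: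
  assumes "0 < t" "t < pi"
  shows "C_fun t < 1"
proof -
  let ?g = "\<lambda>u. sin u - u * cos u"
  have "?g 0 < ?g t"
  proof (rule DERIV_pos_imp_increasing_open[OF assms(1)])
    fix u assume u: "0 < u" "u < t"
    have "DERIV ?g u :> u * sin u" by (auto intro!: derivative_eq_intros)
    moreover have "sin u > 0" using u assms by (intro sin_gt_zero) auto
    ultimately show "\<exists>d. DERIV ?g u :> d \<and> 0 < d" using u by auto
  qed (intro continuous_intros)
  moreover have "sin t > 0" using assms by (intro sin_gt_zero)
  ultimately show ?thesis by (simp add: C_fun_def cot_def field_simps)
qed

lemma C_fun_attains:
  assumes "r < 1"
  shows "\<exists>t. 0 < t \<and> t < pi \<and> C_fun t = r"
proof -
  text \<open>\<open>C t \<ge> cos t\<close> on \<open>(0, \<pi>/2]\<close> and \<open>C t \<le> -M\<close> wherever \<open>cot t = -M\<close> with \<open>t \<ge> \<pi>/2\<close>,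
    which brackets \<open>r\<close> between two points of \<open>(0, \<pi>)\<close>.\<close>
  define t0 where "t0 = arccos (max r 0)"
  have t0: "0 < t0" "t0 \<le> pi/2" "cos t0 = max r 0"
    unfolding t0_def using assms arccos_lt_bounded[of "max r 0"] arccos_le_pi2[of "max r 0"]
    by auto
  have "sin t0 > 0" using t0 pi_ge_two by (intro sin_gt_zero) auto
  moreover have "sin t0 \<le> t0" "cos t0 \<ge> 0" using t0 sin_x_le_x by auto
  ultimately have "C_fun t0 \<ge> cos t0"
    by (simp add: C_fun_def cot_def field_simps) (metis mult.commute mult_left_mono)
  then have at_t0: "r \<le> C_fun t0" using t0 by simp
  define M where "M = max 0 (-r)"
  define t1 where "t1 = pi/2 + arctan M"
  have M: "M \<ge> 0" by (simp add: M_def)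
  then have t1: "pi/2 \<le> t1" "t1 < pi" using arctan_ubound[of M] by (auto simp: t1_def)
  have "cot t1 = - tan (arctan M)" unfolding t1_def cot_def tan_def by (simp add: cos_add sin_add)
  then have "C_fun t1 = - t1 * M" by (simp add: C_fun_def tan_arctan)
  also have "\<dots> \<le> - M" using t1 M pi_ge_two mult_right_mono[of 1 t1 M] by simp
  also have "\<dots> \<le> r" by (simp add: M_def)
  finally have at_t1: "C_fun t1 \<le> r" .
  have "\<forall>t. t0 \<le> t \<and> t \<le> t1 \<longrightarrow> isCont C_fun t"
  proof (intro allI impI)
    fix t assume "t0 \<le> t \<and> t \<le> t1"
    then have "sin t > 0" using t0 t1 by (intro sin_gt_zero) auto
    then show "isCont C_fun t" unfolding C_fun_def[abs_def] by (intro continuous_intros) auto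
  qed
  then obtain t where "t0 \<le> t" "t \<le> t1" "C_fun t = r"
    using IVT2[of C_fun t1 r t0] at_t0 at_t1 t0 t1 by auto
  then show ?thesis using t0 t1 by (intro exI[of _ t]) auto
qed

lemma C_inv:
  assumes "r < 1"
  shows "0 < C_inv r" "C_inv r < pi" "C_fun (C_inv r) = r"
proof -
  have "\<exists>!t. 0 < t \<and> t < pi \<and> C_fun t = r"
    using C_fun_attains[OF assms] C_fun_less_iff by (metis less_irrefl linorder_neqE)
  from theI'[OF this] show "0 < C_inv r" "C_inv r < pi" "C_fun (C_inv r) = r"
    unfolding C_inv_def by auto
qed

lemma less_C_inv_iff:
  assumes "r < 1" "0 < y" "y < pi"
  shows "y < C_inv r \<longleftrightarrow> r < C_fun y"
  using C_fun_less_iff[of "C_inv r" y] C_inv[OF assms(1)] assms by simp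

lemma R_fun_squared:
  assumes "r < 1"
  shows "(R_fun r)\<^sup>2 = (C_inv r)\<^sup>2 + r\<^sup>2"
proof -
  define p where "p = C_inv r"
  have p: "0 < p" "p < pi" "C_fun p = r" using C_inv[OF assms] by (auto simp: p_def)
  then have "sin p > 0" by (intro sin_gt_zero)
  have "r = p * cos p / sin p" using p(3) by (simp add: C_fun_def cot_def)
  then have "p\<^sup>2 + r\<^sup>2 = p\<^sup>2 * ((sin p)\<^sup>2 + (cos p)\<^sup>2) / (sin p)\<^sup>2"
    using \<open>sin p > 0\<close>
    by (simp only: distrib_left add_divide_distrib power_divide power_mult_distrib) simp
  then show ?thesis by (simp add: R_fun_def p_def power_divide)
qed

lemma R_fun_pos:
  assumes "r < 1"
  shows "0 < R_fun r"
  using C_inv[OF assms] sin_gt_zero by (simp add: R_fun_def)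

lemma less_R_fun_iff:
  assumes "r < 1" "0 < y" "0 < s" "s\<^sup>2 = y\<^sup>2 + r\<^sup>2"
  shows "s < R_fun r \<longleftrightarrow> y < C_inv r"
proof -
  have "s < R_fun r \<longleftrightarrow> s\<^sup>2 < (R_fun r)\<^sup>2"
    using R_fun_pos[OF assms(1)] assms(3) by (auto intro: power_strict_mono power2_less_imp_less)
  also have "\<dots> \<longleftrightarrow> y\<^sup>2 < (C_inv r)\<^sup>2" using R_fun_squared[OF assms(1)] assms(4) by simp
  also have "\<dots> \<longleftrightarrow> y < C_inv r"
    using C_inv(1)[OF assms(1)] assms(2) by (auto intro: power_strict_mono power2_less_imp_less)
  finally show ?thesis .
qed

lemma less_angle_iff_less_C_inv:
  assumes "0 < \<theta>" "\<theta> < pi" "0 < y" "r = y * cot \<theta>"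
  shows "y < \<theta> \<longleftrightarrow> r < 1 \<and> y < C_inv r"
proof
  assume "y < \<theta>"
  then have "r < C_fun y"
    using assms cot_less_cot_iff[of \<theta> y] by (simp add: C_fun_def)
  moreover have "C_fun y < 1" using \<open>y < \<theta>\<close> assms by (intro C_fun_less_one) auto
  ultimately show "r < 1 \<and> y < C_inv r"
    using less_C_inv_iff[of r y] \<open>y < \<theta>\<close> assms by auto
next
  assume r: "r < 1 \<and> y < C_inv r"
  then have "y < pi" using C_inv(2)[of r] by auto
  then have "r < C_fun y" using less_C_inv_iff[of r y] r assms by simp
  then show "y < \<theta>"
    using assms cot_less_cot_iff[of \<theta> y] \<open>y < pi\<close> by (simp add: C_fun_def)
qed

lemma tau_c_polar:
  fixes a w :: real
  assumes "w < - \<bar>a\<bar>"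
  obtains \<theta> y where "0 < \<theta>" "\<theta> < pi" "0 < y" "tau_c a w = \<theta> / y"
    "- a = y * cot \<theta>" "w\<^sup>2 = y\<^sup>2 + a\<^sup>2"
proof -
  have w: "w < 0" using assms by linarith
  then have x: "-1 < a / w" "a / w < 1" using assms by (auto simp: divide_simps split: abs_split)
  define \<theta> where "\<theta> = arccos (a / w)"
  have \<theta>: "0 < \<theta>" "\<theta> < pi" using arccos_lt_bounded[OF x] by (auto simp: \<theta>_def)
  then have sin_\<theta>: "sin \<theta> > 0" by (intro sin_gt_zero)
  have cos_\<theta>: "cos \<theta> = a / w" using x by (simp add: \<theta>_def)
  define y where "y = - w * sin \<theta>"
  have "y\<^sup>2 = w\<^sup>2 * (1 - (cos \<theta>)\<^sup>2)"
    by (simp add: y_def power_mult_distrib sin_squared_eq)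
  then have y2: "y\<^sup>2 = w\<^sup>2 - a\<^sup>2" using w by (simp add: cos_\<theta> power_divide right_diff_distrib)
  have "0 < y" using w sin_\<theta> by (simp add: y_def mult_neg_pos)
  then have "sqrt (w\<^sup>2 - a\<^sup>2) = y" by (simp add: y2[symmetric])
  then have "tau_c a w = \<theta> / y" by (simp add: tau_c_def \<theta>_def)
  moreover have "- a = y * cot \<theta>"
    using sin_\<theta> w by (simp add: y_def cot_def cos_\<theta>)
  ultimately show ?thesis using that \<theta> \<open>0 < y\<close> y2 by simp
qed

theorem mainTheorem8:
  fixes a w :: real
  assumes "w < - \<bar>a\<bar>"
  shows "tau_c a w > 1 \<longleftrightarrow> (a > -1 \<and> - R_fun (- a) < w)"
proof -
  obtain \<theta> y where \<theta>: "0 < \<theta>" "\<theta> < pi" and y: "0 < y" and tau: "tau_c a w = \<theta> / y"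
    and cot: "- a = y * cot \<theta>" and w2: "w\<^sup>2 = y\<^sup>2 + a\<^sup>2"
    using tau_c_polar[OF assms] by blast
  have "tau_c a w > 1 \<longleftrightarrow> y < \<theta>" using y by (simp add: tau less_divide_eq)
  also have "\<dots> \<longleftrightarrow> - a < 1 \<and> y < C_inv (- a)"
    using less_angle_iff_less_C_inv[OF \<theta> y cot] .
  also have "\<dots> \<longleftrightarrow> - a < 1 \<and> - w < R_fun (- a)"
    using less_R_fun_iff[of "- a" y "- w"] y w2 assms by auto
  finally show ?thesis by auto
qed

end
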